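(* Let $D\ge1$ and let $\hat{\vec{\mathcal{D}}}_\Theta\in\mathbb{C}^D$, $\Theta=1,\dots,n_q$, be vectors not all zero. For each $\Theta$ let $\hat{\t{e}}_\Theta\in\mathbb{C}^{D\times D}$ be symmetric ($\hat e_{\Theta,ij}=\hat e_{\Theta,ji}$). Define $$\hat{\vec{\mathcal{D}}}^{-1}_\Theta=\frac{\hat{\vec{\mathcal{D}}}^*_\Theta}{\sum_\Lambda\hat{\vec{\mathcal{D}}}_\Lambda\cdot\hat{\vec{\mathcal{D}}}^*_\Lambda},\qquad \hat{\t{g}}_{\Theta\Lambda}=\hat{\vec{\mathcal{D}}}_\Theta\otimes\hat{\vec{\mathcal{D}}}^{-1}_\Lambda,$$ and for $\hat{\vec u}\in\mathbb{C}^D$ the residual $\mathcal{R}(\hat{\vec u})=\sum_\Theta \sum_{i,j}\left|R_{\Theta,ij}\right|^2$ with $\t{R}_\Theta=\frac12\left(\hat{\vec{\mathcal{D}}}_\Theta\otimes\hat{\vec u}+\hat{\vec u}\otimes\hat{\vec{\mathcal{D}}}_\Theta\right)-\hat{\t{e}}_\Theta$. Then $\t{1}+\sum_\Theta\hat{\t{g}}_{\Theta\Theta}$ is invertible; set $\hat{\t{h}}=\left(\t{1}+\sum_\Theta\hat{\t{g}}_{\Theta\Theta}\right)^{-1}$. The residual $\mathcal{R}$ has a unique minimizer $\hat{\vec u}$, characterized by $$\left(\t{1}+\sum_\Theta\hat{\t{g}}_{\Theta\Theta}\right)\cdot\hat{\vec u}=\sum_\Theta\left(\hat{\vec{\mathcal{D}}}^{-1}_\Theta\cdot\hat{\t{e}}_\Theta+\hat{\t{e}}_\Theta\cdot\hat{\vec{\mathcal{D}}}^{-1}_\Theta\right),$$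 i.e. $\hat u_i=\sum_\Theta\sum_{l,m}\left(\hat{\mathcal{D}}^{-1}_{\Theta,l}\hat h_{im}+\hat h_{il}\hat{\mathcal{D}}^{-1}_{\Theta,m}\right)\hat e_{\Theta,lm}$. Furthermore the symmetrized gradients of this minimizer, $\hat e'_{\Theta,ij}=\frac12\left(\hat{\mathcal{D}}_{\Theta,i}\hat u_j+\hat u_i\hat{\mathcal{D}}_{\Theta,j}\right)$, are given by $\hat e'_{\Theta,ij}=\sum_\Lambda\sum_{l,m}\hat G_{\Theta\Lambda,ijlm}\hat e_{\Lambda,lm}$ with $$\hat G_{\Theta\Lambda,ijlm}=\frac12\left(\hat g_{\Theta\Lambda,il}\hat h_{jm}+\hat g_{\Theta\Lambda,im}\hat h_{jl}+\hat g_{\Theta\Lambda,jl}\hat h_{im}+\hat g_{\Theta\Lambda,jm}\hat h_{il}\right).$$ Finally, in the single-element case $n_q=1$ one has $\hat{\t{h}}=\t{1}-\frac12\hat{\t{g}}_{11}$.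
   Context: Small-strain compatibility projection at a fixed nonzero wavevector: $\hat{\vec{\mathcal{D}}}_\Theta$ is the Fourier symbol of the (possibly discrete) gradient operator evaluated in element (evaluation point) $\Theta$ of a voxel, $\hat{\t{e}}_\Theta$ the Fourier coefficient of the strain tensor in element $\Theta$, and $\hat{\vec u}$ the Fourier coefficient of the displacement. $\otimes$ is the outer product, $\vec a\cdot\t{B}$ and $\t{B}\cdot\vec a$ denote vector–matrix contractions, $\t{1}$ the identity matrix, and the star complex conjugation. *)

theory Defs
  imports "HOL-Analysis.Analysis"
begin

text \<open>Gradient symbols Dv :: 'q => complex^'d, one per element Theta in the finite
  index type 'q (so n_q = CARD('q)); strain coefficients e :: 'q => complex^'d^'d.\<close>

definition Dnorm :: "('q::finite \<Rightarrow> complex^'d::finite) \<Rightarrow> complex" where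
  "Dnorm Dv = (\<Sum>\<Lambda>\<in>UNIV. \<Sum>i\<in>UNIV. Dv \<Lambda> $ i * cnj (Dv \<Lambda> $ i))"

definition Dinv :: "('q::finite \<Rightarrow> complex^'d::finite) \<Rightarrow> 'q \<Rightarrow> complex^'d" where
  "Dinv Dv \<Theta> = (\<chi> i. cnj (Dv \<Theta> $ i) / Dnorm Dv)"

definition outer :: "complex^'d::finite \<Rightarrow> complex^'d \<Rightarrow> complex^'d^'d" where
  "outer a b = (\<chi> i j. a $ i * b $ j)"

definition gmat :: "('q::finite \<Rightarrow> complex^'d::finite) \<Rightarrow> 'q \<Rightarrow> 'q \<Rightarrow> complex^'d^'d" where
  "gmat Dv \<Theta> \<Lambda> = outer (Dv \<Theta>) (Dinv Dv \<Lambda>)"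

definition Rmat :: "('q::finite \<Rightarrow> complex^'d::finite) \<Rightarrow> ('q \<Rightarrow> complex^'d^'d) \<Rightarrow> complex^'d \<Rightarrow> 'q \<Rightarrow> complex^'d^'d" where
  "Rmat Dv e u \<Theta> = (\<chi> i j. (outer (Dv \<Theta>) u $ i $ j + outer u (Dv \<Theta>) $ i $ j) / 2 - e \<Theta> $ i $ j)"

definition resid :: "('q::finite \<Rightarrow> complex^'d::finite) \<Rightarrow> ('q \<Rightarrow> complex^'d^'d) \<Rightarrow> complex^'d \<Rightarrow> real" where
  "resid Dv e u = (\<Sum>\<Theta>\<in>UNIV. \<Sum>i\<in>UNIV. \<Sum>j\<in>UNIV. (cmod (Rmat Dv e u \<Theta> $ i $ j))^2)"

definition Amat :: "('q::finite \<Rightarrow> complex^'d::finite) \<Rightarrow> complex^'d^'d" where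
  "Amat Dv = mat 1 + (\<Sum>\<Theta>\<in>UNIV. gmat Dv \<Theta> \<Theta>)"

definition hmat :: "('q::finite \<Rightarrow> complex^'d::finite) \<Rightarrow> complex^'d^'d" where
  "hmat Dv = matrix_inv (Amat Dv)"

definition rhs :: "('q::finite \<Rightarrow> complex^'d::finite) \<Rightarrow> ('q \<Rightarrow> complex^'d^'d) \<Rightarrow> complex^'d" where
  "rhs Dv e = (\<Sum>\<Theta>\<in>UNIV. Dinv Dv \<Theta> v* e \<Theta> + e \<Theta> *v Dinv Dv \<Theta>)"

definition Gten :: "('q::finite \<Rightarrow> complex^'d::finite) \<Rightarrow> 'q \<Rightarrow> 'q \<Rightarrow> 'd \<Rightarrow> 'd \<Rightarrow> 'd \<Rightarrow> 'd \<Rightarrow> complex" where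
  "Gten Dv \<Theta> \<Lambda> i j l m =
     (gmat Dv \<Theta> \<Lambda> $ i $ l * hmat Dv $ j $ m + gmat Dv \<Theta> \<Lambda> $ i $ m * hmat Dv $ j $ l
      + gmat Dv \<Theta> \<Lambda> $ j $ l * hmat Dv $ i $ m + gmat Dv \<Theta> \<Lambda> $ j $ m * hmat Dv $ i $ l) / 2"

end

theory Submission
  imports Defs
begin

text \<open>The residual is the squared distance from the strains e to the image of the
  symmetrized-gradient map S u = (sym (D_\<Theta> \<otimes> u))_\<Theta>. A direct computation gives
  S* S = (N/2) A and, for symmetric e, S* e = (N/2) b, where N = \<Sum>_\<Lambda> |D_\<Lambda>|^2,
  A = 1 + \<Sum>_\<Theta> g_\<Theta>\<Theta> and b is the right-hand side. Hence the residual splits as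
  R(v) = R(u) + |S (v - u)|^2 whenever A u = b. Since some D_\<Theta> is nonzero, S is injective,
  so A is injective (hence invertible) and h b is the unique minimizer. For a single element,
  g_11 is idempotent, and (1 + g)(1 - g/2) = 1 + g/2 - g^2/2 = 1.\<close>

lemma cmod_add_power2: "(cmod (a + b))^2 = (cmod a)^2 + (cmod b)^2 + 2 * Re (a * cnj b)"
  unfolding cmod_power2 by (simp add: power2_eq_square algebra_simps)

lemma minimizer_iff_eq_of_decomposition:
  fixes f Q :: "'a::ab_group_add \<Rightarrow> real"
  assumes split: "\<And>v. f v = f u\<^sub>0 + Q (v - u\<^sub>0)"
    and nonneg: "\<And>w. Q w \<ge> 0" and definite: "\<And>w. Q w = 0 \<Longrightarrow> w = 0"
  shows "(\<forall>v. f u \<le> f v) \<longleftrightarrow> u = u\<^sub>0"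
proof
  assume "\<forall>v. f u \<le> f v"
  then have "f u \<le> f u\<^sub>0" ..
  then have "Q (u - u\<^sub>0) \<le> 0" using split[of u] by simp
  then have "Q (u - u\<^sub>0) = 0" using nonneg[of "u - u\<^sub>0"] by linarith
  then have "u - u\<^sub>0 = 0" by (rule definite)
  then show "u = u\<^sub>0" by simp
qed (use split nonneg in \<open>metis le_add_same_cancel1\<close>)

lemma matrix_add_rdistrib: "(A + B) ** (C :: 'a::semiring_1^'n^'m) = A ** C + B ** C"
  by (simp add: matrix_matrix_mult_def vec_eq_iff distrib_right sum.distrib)

lemma matrix_diff_ldistrib: "(A :: 'a::ring_1^'n^'m) ** (B - C) = A ** B - A ** C"
  by (simp add: matrix_matrix_mult_def vec_eq_iff right_diff_distrib sum_subtractf)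

lemma matrix_inv_left_right:
  assumes "invertible A"
  shows "A ** matrix_inv A = mat 1" "matrix_inv A ** A = mat 1"
  using someI_ex[OF assms[unfolded invertible_def]] unfolding matrix_inv_def by auto

lemma matrix_inv_eq_right_inverse:
  fixes A B :: "'a::field^'n^'n"
  assumes AB: "A ** B = mat 1"
  shows "matrix_inv A = B"
proof -
  have "invertible A" using AB invertible_right_inverse by blast
  have "matrix_inv A = matrix_inv A ** (A ** B)" by (simp add: AB)
  also have "\<dots> = (matrix_inv A ** A) ** B" by (rule matrix_mul_assoc)
  also have "\<dots> = B" by (simp add: matrix_inv_left_right \<open>invertible A\<close>)
  finally show ?thesis .
qed

lemma mat_1_add_idempotent_mult:
  fixes g :: "'a::real_algebra_1^'n^'n"
  assumes idem: "g ** g = g"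
  shows "(mat 1 + g) ** (mat 1 - (1/2) *\<^sub>R g) = mat 1"
proof -
  have "(mat 1 + g) ** (mat 1 - (1/2) *\<^sub>R g) = (mat 1 - (1/2) *\<^sub>R g) + g ** (mat 1 - (1/2) *\<^sub>R g)"
    unfolding matrix_add_rdistrib matrix_mul_lid ..
  also have "g ** (mat 1 - (1/2) *\<^sub>R g) = g - (1/2) *\<^sub>R (g ** g)"
    unfolding matrix_diff_ldistrib matrix_mul_rid matrix_scalar_ac scalar_matrix_assoc ..
  also have "(mat 1 - (1/2) *\<^sub>R g) + (g - (1/2) *\<^sub>R (g ** g)) = mat 1"
    unfolding idem by (simp add: algebra_simps flip: scaleR_add_left)
  finally show ?thesis .
qed

lemma outer_mult_outer_component:
  "(outer a b ** outer c d) $ i $ k = (\<Sum>j\<in>UNIV. b $ j * c $ j) * (a $ i * d $ k)"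
  by (simp add: outer_def matrix_matrix_mult_def sum_distrib_left sum_distrib_right mult_ac)

definition sym_grad :: "complex^'d::finite \<Rightarrow> complex^'d \<Rightarrow> 'd \<Rightarrow> 'd \<Rightarrow> complex" where
  "sym_grad D u i j = (D $ i * u $ j + u $ i * D $ j) / 2"

definition sym_grad_sqnorm :: "('q::finite \<Rightarrow> complex^'d::finite) \<Rightarrow> complex^'d \<Rightarrow> real" where
  "sym_grad_sqnorm Dv w = (\<Sum>\<Theta>\<in>UNIV. \<Sum>i\<in>UNIV. \<Sum>j\<in>UNIV. (cmod (sym_grad (Dv \<Theta>) w i j))^2)"

lemma sum_sym_grad_mult_cnj:
  fixes D u w :: "complex^'d::finite"
  shows "(\<Sum>i\<in>UNIV. \<Sum>j\<in>UNIV. sym_grad D u i j * cnj (sym_grad D w i j))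
     = (1/2) * (\<Sum>j\<in>UNIV. cnj (w $ j) *
          ((\<Sum>i\<in>UNIV. D $ i * cnj (D $ i)) * u $ j + D $ j * (\<Sum>i\<in>UNIV. cnj (D $ i) * u $ i)))"
proof -
  define a where "a i j = D $ i * cnj (D $ i) * (u $ j * cnj (w $ j))" for i j
  define c where "c i j = (D $ i * cnj (w $ i)) * (u $ j * cnj (D $ j))" for i j
  have expand: "sym_grad D u i j * cnj (sym_grad D w i j) = (1/4) * (a i j + a j i + c i j + c j i)"
    for i j by (simp add: sym_grad_def a_def c_def algebra_simps)
  have "(\<Sum>i\<in>UNIV. \<Sum>j\<in>UNIV. sym_grad D u i j * cnj (sym_grad D w i j))
     = (1/4) * ((\<Sum>i\<in>UNIV. \<Sum>j\<in>UNIV. a i j) + (\<Sum>i\<in>UNIV. \<Sum>j\<in>UNIV. a j i)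
              + (\<Sum>i\<in>UNIV. \<Sum>j\<in>UNIV. c i j) + (\<Sum>i\<in>UNIV. \<Sum>j\<in>UNIV. c j i))"
    by (simp add: expand sum.distrib flip: sum_divide_distrib)
  also have "\<dots> = (1/2) * ((\<Sum>i\<in>UNIV. \<Sum>j\<in>UNIV. a i j) + (\<Sum>i\<in>UNIV. \<Sum>j\<in>UNIV. c i j))"
    by (simp add: sum.swap[of "\<lambda>i j. a j i"] sum.swap[of "\<lambda>i j. c j i"] algebra_simps)
  also have "(\<Sum>i\<in>UNIV. \<Sum>j\<in>UNIV. a i j)
      = (\<Sum>j\<in>UNIV. cnj (w $ j) * ((\<Sum>i\<in>UNIV. D $ i * cnj (D $ i)) * u $ j))"
    unfolding a_def by (subst sum.swap) (simp add: sum_distrib_left sum_distrib_right algebra_simps)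
  also have "(\<Sum>i\<in>UNIV. \<Sum>j\<in>UNIV. c i j)
      = (\<Sum>j\<in>UNIV. cnj (w $ j) * (D $ j * (\<Sum>i\<in>UNIV. cnj (D $ i) * u $ i)))"
    by (simp add: c_def sum_distrib_left algebra_simps)
  finally show ?thesis by (simp add: sum.distrib algebra_simps)
qed

lemma sum_mult_cnj_sym_grad:
  fixes D w :: "complex^'d::finite" and E :: "complex^'d^'d"
  assumes sym: "\<And>i j. E $ i $ j = E $ j $ i"
  shows "(\<Sum>i\<in>UNIV. \<Sum>j\<in>UNIV. E $ i $ j * cnj (sym_grad D w i j))
       = (\<Sum>j\<in>UNIV. cnj (w $ j) * (\<Sum>i\<in>UNIV. cnj (D $ i) * E $ i $ j))"
proof -
  define a where "a i j = E $ i $ j * cnj (D $ i) * cnj (w $ j)" for i j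
  have expand: "E $ i $ j * cnj (sym_grad D w i j) = (1/2) * (a i j + a j i)" for i j
    by (simp add: a_def sym_grad_def sym[of i j] algebra_simps)
  have "(\<Sum>i\<in>UNIV. \<Sum>j\<in>UNIV. E $ i $ j * cnj (sym_grad D w i j))
      = (1/2) * ((\<Sum>i\<in>UNIV. \<Sum>j\<in>UNIV. a i j) + (\<Sum>i\<in>UNIV. \<Sum>j\<in>UNIV. a j i))"
    by (simp add: expand sum.distrib flip: sum_divide_distrib)
  also have "(\<Sum>i\<in>UNIV. \<Sum>j\<in>UNIV. a j i) = (\<Sum>i\<in>UNIV. \<Sum>j\<in>UNIV. a i j)"
    by (rule sum.swap)
  also have "(\<Sum>i\<in>UNIV. \<Sum>j\<in>UNIV. a i j) = (\<Sum>j\<in>UNIV. cnj (w $ j) * (\<Sum>i\<in>UNIV. cnj (D $ i) * E $ i $ j))"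
    unfolding a_def by (subst sum.swap) (simp add: sum_distrib_left algebra_simps)
  finally show ?thesis by simp
qed

lemma sym_grad_eq_0_imp_eq_0:
  assumes "D \<noteq> 0" and zero: "\<And>i j. sym_grad D w i j = 0"
  shows "w = 0"
proof -
  obtain k where k: "D $ k \<noteq> 0" using \<open>D \<noteq> 0\<close> by (metis vec_eq_iff zero_index)
  have "w $ k = 0" using zero[of k k] k by (simp add: sym_grad_def)
  then have "w $ j = 0" for j using zero[of k j] k by (simp add: sym_grad_def)
  then show ?thesis by (simp add: vec_eq_iff)
qed

lemma sym_grad_sqnorm_nonneg: "sym_grad_sqnorm Dv w \<ge> 0"
  unfolding sym_grad_sqnorm_def by (intro sum_nonneg) auto

lemma sym_grad_sqnorm_eq_0_imp_eq_0:
  assumes nz: "\<exists>\<Theta>. Dv \<Theta> \<noteq> 0" and "sym_grad_sqnorm Dv w = 0"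
  shows "w = 0"
proof -
  obtain T where T: "Dv T \<noteq> 0" using nz by blast
  have "(cmod (sym_grad (Dv T) w i j))^2 = 0" for i j
    using \<open>sym_grad_sqnorm Dv w = 0\<close> unfolding sym_grad_sqnorm_def
    by (simp add: sum_nonneg_eq_0_iff sum_nonneg)
  then show ?thesis using sym_grad_eq_0_imp_eq_0[OF T] by simp
qed

lemma Dnorm_eq_of_real: "Dnorm Dv = of_real (\<Sum>\<Lambda>\<in>UNIV. \<Sum>i\<in>UNIV. (cmod (Dv \<Lambda> $ i))^2)"
  by (simp only: Dnorm_def of_real_sum complex_norm_square)

lemma Dnorm_nonzero:
  assumes "\<exists>\<Theta>. Dv \<Theta> \<noteq> 0"
  shows "Dnorm Dv \<noteq> 0"
proof -
  obtain T k where k: "Dv T $ k \<noteq> 0" using assms by (metis vec_eq_iff zero_index)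
  have "0 < (cmod (Dv T $ k))^2" using k by simp
  also have "\<dots> \<le> (\<Sum>i\<in>UNIV. (cmod (Dv T $ i))^2)"
    by (rule member_le_sum) auto
  also have "\<dots> \<le> (\<Sum>\<Lambda>\<in>UNIV. \<Sum>i\<in>UNIV. (cmod (Dv \<Lambda> $ i))^2)"
    by (rule member_le_sum[where f = "\<lambda>\<Lambda>. \<Sum>i\<in>UNIV. (cmod (Dv \<Lambda> $ i))^2"]) (auto intro: sum_nonneg)
  finally show ?thesis unfolding Dnorm_eq_of_real by (metis of_real_eq_0_iff less_irrefl)
qed

lemma Amat_mult_vector_component:
  "(Amat Dv *v u) $ j = u $ j + (\<Sum>\<Theta>\<in>UNIV. Dv \<Theta> $ j * (\<Sum>i\<in>UNIV. cnj (Dv \<Theta> $ i) * u $ i)) / Dnorm Dv"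
proof -
  have "((\<Sum>\<Theta>\<in>UNIV. gmat Dv \<Theta> \<Theta>) *v u) $ j
      = (\<Sum>\<Theta>\<in>UNIV. Dv \<Theta> $ j * (\<Sum>i\<in>UNIV. cnj (Dv \<Theta> $ i) * u $ i)) / Dnorm Dv"
    unfolding gmat_def outer_def Dinv_def matrix_vector_mult_def
    by (simp add: sum_component sum_distrib_right sum_distrib_left sum_divide_distrib mult.assoc
        mult.left_commute) (rule sum.swap)
  then show ?thesis
    unfolding Amat_def matrix_vector_mult_add_rdistrib by simp
qed

lemma rhs_component:
  assumes sym: "\<And>\<Theta> i j. e \<Theta> $ i $ j = e \<Theta> $ j $ i"
  shows "rhs Dv e $ j = 2 * (\<Sum>\<Theta>\<in>UNIV. \<Sum>i\<in>UNIV. cnj (Dv \<Theta> $ i) * e \<Theta> $ i $ j) / Dnorm Dv"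
  by (simp add: rhs_def Dinv_def matrix_vector_mult_def vector_matrix_mult_def sum_component
      sum.distrib sum_distrib_left sum_distrib_right sum_divide_distrib algebra_simps sym[of _ j])

text \<open>The two adjoint identities S* S = (N/2) A and S* e = (N/2) b, tested against w.\<close>

lemma sum_sym_grad_mult_cnj_eq_Amat:
  assumes N: "Dnorm Dv \<noteq> 0"
  shows "(\<Sum>\<Theta>\<in>UNIV. \<Sum>i\<in>UNIV. \<Sum>j\<in>UNIV. sym_grad (Dv \<Theta>) u i j * cnj (sym_grad (Dv \<Theta>) w i j))
     = Dnorm Dv / 2 * (\<Sum>j\<in>UNIV. cnj (w $ j) * (Amat Dv *v u) $ j)"
proof -
  have "(\<Sum>\<Theta>\<in>UNIV. \<Sum>i\<in>UNIV. \<Sum>j\<in>UNIV. sym_grad (Dv \<Theta>) u i j * cnj (sym_grad (Dv \<Theta>) w i j))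
     = (1/2) * (\<Sum>j\<in>UNIV. \<Sum>\<Theta>\<in>UNIV. cnj (w $ j) * ((\<Sum>i\<in>UNIV. Dv \<Theta> $ i * cnj (Dv \<Theta> $ i)) * u $ j
          + Dv \<Theta> $ j * (\<Sum>i\<in>UNIV. cnj (Dv \<Theta> $ i) * u $ i)))"
    by (simp add: sum_sym_grad_mult_cnj sum_distrib_left) (rule sum.swap)
  also have "\<dots> = (1/2) * (\<Sum>j\<in>UNIV. cnj (w $ j) * (Dnorm Dv * u $ j
          + (\<Sum>\<Theta>\<in>UNIV. Dv \<Theta> $ j * (\<Sum>i\<in>UNIV. cnj (Dv \<Theta> $ i) * u $ i))))"
    by (simp add: Dnorm_def sum_distrib_left sum_distrib_right sum.distrib distrib_left)
  also have "\<dots> = Dnorm Dv / 2 * (\<Sum>j\<in>UNIV. cnj (w $ j) * (Amat Dv *v u) $ j)"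
    unfolding Amat_mult_vector_component sum_distrib_left using N
    by (intro sum.cong) (simp_all add: field_simps)
  finally show ?thesis .
qed

lemma sum_mult_cnj_sym_grad_eq_rhs:
  assumes N: "Dnorm Dv \<noteq> 0" and sym: "\<And>\<Theta> i j. e \<Theta> $ i $ j = e \<Theta> $ j $ i"
  shows "(\<Sum>\<Theta>\<in>UNIV. \<Sum>i\<in>UNIV. \<Sum>j\<in>UNIV. e \<Theta> $ i $ j * cnj (sym_grad (Dv \<Theta>) w i j))
     = Dnorm Dv / 2 * (\<Sum>j\<in>UNIV. cnj (w $ j) * rhs Dv e $ j)"
proof -
  have "(\<Sum>\<Theta>\<in>UNIV. \<Sum>i\<in>UNIV. \<Sum>j\<in>UNIV. e \<Theta> $ i $ j * cnj (sym_grad (Dv \<Theta>) w i j))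
     = (\<Sum>j\<in>UNIV. \<Sum>\<Theta>\<in>UNIV. cnj (w $ j) * (\<Sum>i\<in>UNIV. cnj (Dv \<Theta> $ i) * e \<Theta> $ i $ j))"
    by (simp add: sum_mult_cnj_sym_grad sym) (rule sum.swap)
  also have "\<dots> = Dnorm Dv / 2 * (\<Sum>j\<in>UNIV. cnj (w $ j) * rhs Dv e $ j)"
    unfolding rhs_component[OF sym] sum_distrib_left using N
    by (intro sum.cong) (simp_all add: field_simps sum_distrib_left)
  finally show ?thesis .
qed

lemma invertible_Amat:
  assumes nz: "\<exists>\<Theta>. Dv \<Theta> \<noteq> 0"
  shows "invertible (Amat Dv)"
proof -
  have "x = 0" if "Amat Dv *v x = 0" for x
  proof -
    have "complex_of_real (sym_grad_sqnorm Dv x)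
        = (\<Sum>\<Theta>\<in>UNIV. \<Sum>i\<in>UNIV. \<Sum>j\<in>UNIV. sym_grad (Dv \<Theta>) x i j * cnj (sym_grad (Dv \<Theta>) x i j))"
      by (simp only: sym_grad_sqnorm_def of_real_sum complex_norm_square)
    also have "\<dots> = 0"
      unfolding sum_sym_grad_mult_cnj_eq_Amat[OF Dnorm_nonzero[OF nz]] \<open>Amat Dv *v x = 0\<close> by simp
    finally show "x = 0" using sym_grad_sqnorm_eq_0_imp_eq_0[OF nz] by simp
  qed
  then show ?thesis using invertible_left_inverse matrix_left_invertible_ker by blast
qed

lemma Rmat_eq_sym_grad: "Rmat Dv e u \<Theta> $ i $ j = sym_grad (Dv \<Theta>) u i j - e \<Theta> $ i $ j"
  by (simp add: Rmat_def outer_def sym_grad_def)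

lemma resid_add:
  "resid Dv e (u + w) = resid Dv e u + sym_grad_sqnorm Dv w
     + 2 * Re (\<Sum>\<Theta>\<in>UNIV. \<Sum>i\<in>UNIV. \<Sum>j\<in>UNIV. Rmat Dv e u \<Theta> $ i $ j * cnj (sym_grad (Dv \<Theta>) w i j))"
proof -
  have "Rmat Dv e (u + w) \<Theta> $ i $ j = Rmat Dv e u \<Theta> $ i $ j + sym_grad (Dv \<Theta>) w i j" for \<Theta> i j
    by (simp add: Rmat_eq_sym_grad sym_grad_def algebra_simps add_divide_distrib)
  then show ?thesis
    by (simp add: resid_def sym_grad_sqnorm_def cmod_add_power2 sum.distrib sum_distrib_left)
qed

text \<open>At a solution of the normal equations the cross term vanishes.\<close>

lemma resid_eq_add_sym_grad_sqnorm:
  assumes N: "Dnorm Dv \<noteq> 0" and sym: "\<And>\<Theta> i j. e \<Theta> $ i $ j = e \<Theta> $ j $ i"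
    and normal: "Amat Dv *v u = rhs Dv e"
  shows "resid Dv e v = resid Dv e u + sym_grad_sqnorm Dv (v - u)"
proof -
  have "(\<Sum>\<Theta>\<in>UNIV. \<Sum>i\<in>UNIV. \<Sum>j\<in>UNIV. Rmat Dv e u \<Theta> $ i $ j * cnj (sym_grad (Dv \<Theta>) w i j))
    = (\<Sum>\<Theta>\<in>UNIV. \<Sum>i\<in>UNIV. \<Sum>j\<in>UNIV. sym_grad (Dv \<Theta>) u i j * cnj (sym_grad (Dv \<Theta>) w i j))
     - (\<Sum>\<Theta>\<in>UNIV. \<Sum>i\<in>UNIV. \<Sum>j\<in>UNIV. e \<Theta> $ i $ j * cnj (sym_grad (Dv \<Theta>) w i j))" for w
    by (simp add: Rmat_eq_sym_grad left_diff_distrib sum_subtractf)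
  also have "\<dots> w = 0" for w
    unfolding sum_sym_grad_mult_cnj_eq_Amat[OF N] sum_mult_cnj_sym_grad_eq_rhs[OF N sym] normal
    by simp
  finally show ?thesis using resid_add[of Dv e u "v - u"] by simp
qed

lemma matrix_vector_mult_rhs_component:
  fixes h :: "complex^'d::finite^'d"
  shows "(h *v rhs Dv e) $ i = (\<Sum>\<Theta>\<in>UNIV. \<Sum>l\<in>UNIV. \<Sum>m\<in>UNIV.
           (Dinv Dv \<Theta> $ l * h $ i $ m + h $ i $ l * Dinv Dv \<Theta> $ m) * e \<Theta> $ l $ m)"
proof -
  have "(h *v rhs Dv e) $ i
      = (\<Sum>m\<in>UNIV. \<Sum>\<Theta>\<in>UNIV. \<Sum>l\<in>UNIV. Dinv Dv \<Theta> $ l * h $ i $ m * e \<Theta> $ l $ m)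
      + (\<Sum>m\<in>UNIV. \<Sum>\<Theta>\<in>UNIV. \<Sum>l\<in>UNIV. h $ i $ m * Dinv Dv \<Theta> $ l * e \<Theta> $ m $ l)"
    by (simp add: rhs_def matrix_vector_mult_def vector_matrix_mult_def sum_component
        distrib_left sum.distrib sum_distrib_left mult_ac)
  also have "(\<Sum>m\<in>UNIV. \<Sum>\<Theta>\<in>UNIV. \<Sum>l\<in>UNIV. Dinv Dv \<Theta> $ l * h $ i $ m * e \<Theta> $ l $ m)
      = (\<Sum>\<Theta>\<in>UNIV. \<Sum>l\<in>UNIV. \<Sum>m\<in>UNIV. Dinv Dv \<Theta> $ l * h $ i $ m * e \<Theta> $ l $ m)"
    by (subst sum.swap) (subst (2) sum.swap, simp)
  also have "(\<Sum>m\<in>UNIV. \<Sum>\<Theta>\<in>UNIV. \<Sum>l\<in>UNIV. h $ i $ m * Dinv Dv \<Theta> $ l * e \<Theta> $ m $ l)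
      = (\<Sum>\<Theta>\<in>UNIV. \<Sum>m\<in>UNIV. \<Sum>l\<in>UNIV. h $ i $ m * Dinv Dv \<Theta> $ l * e \<Theta> $ m $ l)"
    by (rule sum.swap)
  finally show ?thesis by (simp add: distrib_right sum.distrib)
qed

lemma sym_grad_eq_sum_Gten:
  assumes u: "\<And>i. u $ i = (\<Sum>\<Theta>\<in>UNIV. \<Sum>l\<in>UNIV. \<Sum>m\<in>UNIV.
               (Dinv Dv \<Theta> $ l * hmat Dv $ i $ m + hmat Dv $ i $ l * Dinv Dv \<Theta> $ m) * e \<Theta> $ l $ m)"
  shows "sym_grad (Dv \<Theta>) u i j = (\<Sum>\<Lambda>\<in>UNIV. \<Sum>l\<in>UNIV. \<Sum>m\<in>UNIV. Gten Dv \<Theta> \<Lambda> i j l m * e \<Lambda> $ l $ m)"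
proof -
  define t where "t i \<Lambda> l m =
      (Dinv Dv \<Lambda> $ l * hmat Dv $ i $ m + hmat Dv $ i $ l * Dinv Dv \<Lambda> $ m) * e \<Lambda> $ l $ m" for i \<Lambda> l m
  have "sym_grad (Dv \<Theta>) u i j
      = (\<Sum>\<Lambda>\<in>UNIV. \<Sum>l\<in>UNIV. \<Sum>m\<in>UNIV. (Dv \<Theta> $ i * t j \<Lambda> l m + t i \<Lambda> l m * Dv \<Theta> $ j) / 2)"
    unfolding sym_grad_def u[of i] u[of j] t_def[symmetric] sum_divide_distrib sum_distrib_left
      sum_distrib_right sum.distrib[symmetric] add_divide_distrib
    by (rule refl)
  also have "\<dots> = (\<Sum>\<Lambda>\<in>UNIV. \<Sum>l\<in>UNIV. \<Sum>m\<in>UNIV. Gten Dv \<Theta> \<Lambda> i j l m * e \<Lambda> $ l $ m)"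
    by (intro sum.cong refl) (simp add: t_def Gten_def gmat_def outer_def algebra_simps add_divide_distrib)
  finally show ?thesis .
qed

lemma sum_Dinv_mult:
  assumes "\<exists>\<Theta>. Dv \<Theta> \<noteq> 0"
  shows "(\<Sum>\<Theta>\<in>UNIV. \<Sum>i\<in>UNIV. Dinv Dv \<Theta> $ i * Dv \<Theta> $ i) = 1"
  using Dnorm_nonzero[OF assms]
  by (simp add: Dinv_def Dnorm_def mult.commute flip: sum_divide_distrib)

lemma hmat_single_element:
  fixes Dv :: "'q::finite \<Rightarrow> complex^'d::finite"
  assumes nz: "\<exists>\<Theta>. Dv \<Theta> \<noteq> 0" and single: "CARD('q) = 1"
  shows "hmat Dv = mat 1 - (1/2) *\<^sub>R gmat Dv T T"
proof -
  obtain x :: 'q where "UNIV = {x}"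
    using single card_1_singleton_iff[of "UNIV :: 'q set"] by auto
  then have UNIV_eq: "UNIV = {T}" by (metis UNIV_I singletonD)
  have "(gmat Dv T T ** gmat Dv T T) $ i $ k = gmat Dv T T $ i $ k" for i k
    using sum_Dinv_mult[OF nz] unfolding gmat_def outer_mult_outer_component UNIV_eq
    by (simp add: outer_def)
  then have "gmat Dv T T ** gmat Dv T T = gmat Dv T T" by (simp add: vec_eq_iff)
  then have "Amat Dv ** (mat 1 - (1/2) *\<^sub>R gmat Dv T T) = mat 1"
    unfolding Amat_def UNIV_eq by (simp add: mat_1_add_idempotent_mult)
  then show ?thesis
    unfolding hmat_def by (rule matrix_inv_eq_right_inverse)
qed

theorem mainTheorem6:
  fixes Dv :: "'q::finite \<Rightarrow> complex^'d::finite"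
    and e :: "'q \<Rightarrow> complex^'d^'d"
  assumes nz: "\<exists>\<Theta>. Dv \<Theta> \<noteq> 0"
    and sym: "\<And>\<Theta> i j. e \<Theta> $ i $ j = e \<Theta> $ j $ i"
  shows "invertible (Amat Dv)
    \<and> (\<exists>!u. \<forall>v. resid Dv e u \<le> resid Dv e v)
    \<and> (\<forall>u. (\<forall>v. resid Dv e u \<le> resid Dv e v) \<longleftrightarrow> Amat Dv *v u = rhs Dv e)
    \<and> (\<forall>u. (\<forall>v. resid Dv e u \<le> resid Dv e v) \<longrightarrow>
          (\<forall>i. u $ i = (\<Sum>\<Theta>\<in>UNIV. \<Sum>l\<in>UNIV. \<Sum>m\<in>UNIV.
               (Dinv Dv \<Theta> $ l * hmat Dv $ i $ m + hmat Dv $ i $ l * Dinv Dv \<Theta> $ m) * e \<Theta> $ l $ m))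
        \<and> (\<forall>\<Theta> i j. (Dv \<Theta> $ i * u $ j + u $ i * Dv \<Theta> $ j) / 2 =
               (\<Sum>\<Lambda>\<in>UNIV. \<Sum>l\<in>UNIV. \<Sum>m\<in>UNIV. Gten Dv \<Theta> \<Lambda> i j l m * e \<Lambda> $ l $ m)))
    \<and> (CARD('q) = 1 \<longrightarrow> (\<forall>\<Theta>. hmat Dv = mat 1 - scaleR (1/2) (gmat Dv \<Theta> \<Theta>)))"
proof -
  have inv: "invertible (Amat Dv)" by (rule invertible_Amat[OF nz])
  define u\<^sub>0 where "u\<^sub>0 = hmat Dv *v rhs Dv e"
  have normal: "Amat Dv *v u\<^sub>0 = rhs Dv e"
    unfolding u\<^sub>0_def hmat_def matrix_vector_mul_assoc matrix_inv_left_right(1)[OF inv] by simp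
  have minimizer_iff: "(\<forall>v. resid Dv e u \<le> resid Dv e v) \<longleftrightarrow> u = u\<^sub>0" for u
    using resid_eq_add_sym_grad_sqnorm[OF Dnorm_nonzero[OF nz] sym normal] sym_grad_sqnorm_nonneg
      sym_grad_sqnorm_eq_0_imp_eq_0[OF nz] by (rule minimizer_iff_eq_of_decomposition)
  have normal_iff: "Amat Dv *v u = rhs Dv e \<longleftrightarrow> u = u\<^sub>0" for u
    using normal inj_matrix_vector_mult[OF inv] by (metis injD)
  have u\<^sub>0_formula: "u\<^sub>0 $ i = (\<Sum>\<Theta>\<in>UNIV. \<Sum>l\<in>UNIV. \<Sum>m\<in>UNIV.
      (Dinv Dv \<Theta> $ l * hmat Dv $ i $ m + hmat Dv $ i $ l * Dinv Dv \<Theta> $ m) * e \<Theta> $ l $ m)" for i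
    unfolding u\<^sub>0_def by (rule matrix_vector_mult_rhs_component)
  show ?thesis
    using inv u\<^sub>0_formula sym_grad_eq_sum_Gten[OF u\<^sub>0_formula] hmat_single_element[OF nz]
    by (simp add: minimizer_iff normal_iff sym_grad_def)
qed

end
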